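(* Let $k\in\mathbb{N}$ with $\gcd(k,6)=3$, let $h$ be an integer with $\gcd(h,k)=1$, and let $h'$ be an integer with $hh'\equiv-1\pmod{k}$ and $2\mid h'$. Then $$\frac{\omega_{2h,\frac{k}{3}}\,\omega_{2h,k}\,\omega_{h,k}}{\omega_{h,\frac{k}{3}}} =-\exp\!\left(- \frac{2\pi i}{36k} \left(-9k+9k^2+ h (-9+5k^2) - 2k^2h' \right)\right)$$ and $$\frac{\omega_{h,\frac{k}{3}}\,\omega_{2h,k}\,\omega_{h,k}}{\omega_{2h,\frac{k}{3}}^3} =-\exp\!\left(- \frac{2\pi i}{18k} \left(3k^2+ h (9+k^2) - k^2h' \right)\right).$$
   Context: For coprime integers $h$ and $K\ge1$, $\omega_{h,K}=\exp(\pi i\, s(h,K))$, where $s(h,K)=\sum_{r=1}^{K-1}\frac{r}{K}\left(\frac{hr}{K}-\lfloor \frac{hr}{K}\rfloor-\frac12\right)$ is the Dedekind sum (the multiplier of the Dedekind eta function). *)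

theory Defs
  imports "HOL-Analysis.Analysis" "HOL-Number_Theory.Cong"
begin

definition dedekind_sum :: "int \<Rightarrow> nat \<Rightarrow> real" where
  "dedekind_sum h K = (\<Sum>r\<in>{1..<K}. (real r / real K) *
      (real_of_int h * real r / real K - of_int \<lfloor>real_of_int h * real r / real K\<rfloor> - 1/2))"

definition omega :: "int \<Rightarrow> nat \<Rightarrow> complex" where
  "omega h K = exp (complex_of_real pi * \<i> * complex_of_real (dedekind_sum h K))"

end

theory Submission
  imports Defs "HOL-Number_Theory.Modular_Inverse"
begin

(* Put k = 3m and N(a,K) = 12 K s(a,K), an integer:
   N(a,K) = 2a(K-1)(2K-1) - 12 T(a,K) - 3K(K-1) with T(a,K) = sum_{0<x<K} x floor(ax/K).
   Both identities state that a fixed integer combination of N(h,m), N(2h,m), N(h,3m), N(2h,3m)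
   agrees with a polynomial in h, h', m modulo 216m.
   Modulo 108m this follows from the reciprocity law
   12 a T(a,K) + 12 K T(K,a) = 6K(K-1)(a-1)^2 + 3K(K-1)(a-1) + (a^2-1)(K-1)(2K-1),
   multiplied by h' (resp. h'/2), the inverse of -h (resp. -2h) modulo k.
   Since m is odd only the factor 8 remains.  There every T enters with a coefficient that is
   4 mod 8, so only the parity of T(h,m) + T(2h,m) + T(h,3m) + T(2h,3m) matters, and splitting
   the range of T(a,3m) into thirds shows that this parity is that of h + 1.
   Reciprocity needs h > 0, which is harmless since everything depends only on h mod 108m. *)

definition floor_sum :: "int \<Rightarrow> int \<Rightarrow> int" where
  "floor_sum a K = (\<Sum>x\<in>{1..<K}. x * (a * x div K))"

definition dedekind_numerator :: "int \<Rightarrow> int \<Rightarrow> int" where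
  "dedekind_numerator a K = 2 * a * (K - 1) * (2 * K - 1) - 12 * floor_sum a K - 3 * K * (K - 1)"

lemma sum_atLeastLessThan_int_id:
  fixes K :: int
  assumes "K \<ge> 0"
  shows "2 * (\<Sum>x\<in>{1..<K}. x) = K * (K - 1)"
  using assms
proof (induction K rule: int_ge_induct)
  case (step i)
  show ?case
  proof (cases "i = 0")
    case False
    then have "{1..<i+1} = insert i {1..<i}" using step by auto
    then show ?thesis using step by (auto simp: algebra_simps)
  qed simp
qed simp

lemma sum_atLeastLessThan_int_square:
  fixes K :: int
  assumes "K \<ge> 0"
  shows "6 * (\<Sum>x\<in>{1..<K}. x^2) = (K - 1) * K * (2*K - 1)"
  using assms
proof (induction K rule: int_ge_induct)
  case (step i)
  show ?case
  proof (cases "i = 0")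
    case False
    then have "{1..<i+1} = insert i {1..<i}" using step by auto
    then show ?thesis using step by (auto simp: algebra_simps power2_eq_square)
  qed simp
qed simp

lemma sum_atLeastAtMost_int_odd:
  fixes n :: int
  assumes "n \<ge> 0"
  shows "(\<Sum>s\<in>{1..n}. 2 * s - 1) = n^2"
  using assms
proof (induction n rule: int_ge_induct)
  case (step i)
  have "{1..i+1} = insert (i+1) {1..i}" using step by auto
  then show ?case using step by (auto simp: algebra_simps power2_eq_square)
qed simp

lemma dedekind_sum_eq_numerator:
  assumes "K > 0"
  shows "12 * real K * dedekind_sum a K = of_int (dedekind_numerator a (int K))"
proof -
  define S1 where "S1 = (\<Sum>x\<in>{1..<int K}. x)"
  define S2 where "S2 = (\<Sum>x\<in>{1..<int K}. x^2)"
  have S1: "real_of_int S1 = real K * (real K - 1) / 2"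
    using arg_cong[OF sum_atLeastLessThan_int_id[of "int K"], of real_of_int] by (simp add: S1_def)
  have S2: "real_of_int S2 = (real K - 1) * real K * (2 * real K - 1) / 6"
    using arg_cong[OF sum_atLeastLessThan_int_square[of "int K"], of real_of_int] by (simp add: S2_def)
  have "dedekind_sum a K = (\<Sum>x\<in>int ` {1..<K}. (of_int x / real K) *
      (of_int (a * x) / real K - of_int (a * x div int K) - 1/2))"
    unfolding dedekind_sum_def
    by (subst sum.reindex) (simp_all add: floor_divide_of_int_eq[where 'a=real, symmetric])
  then have ds: "dedekind_sum a K = (\<Sum>x\<in>{1..<int K}. (of_int x / real K) *
      (of_int (a * x) / real K - of_int (a * x div int K) - 1/2))"
    by (simp add: image_int_atLeastLessThan)
  have "real K * (12 * real K * dedekind_sum a K) =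
     (\<Sum>x\<in>{1..<int K}. 12 * of_int a * of_int (x^2) - 12 * real K * of_int (x * (a * x div int K))
        - 6 * real K * of_int x)"
    unfolding ds sum_distrib_left using assms by (intro sum.cong) (simp_all add: field_simps power2_eq_square)
  also have "\<dots> = 12 * of_int a * of_int S2 - 12 * real K * of_int (floor_sum a (int K))
      - 6 * real K * of_int S1"
    unfolding S1_def S2_def floor_sum_def by (simp add: sum_subtractf sum_distrib_left)
  also have "\<dots> = real K * of_int (dedekind_numerator a (int K))"
    unfolding S1 S2 dedekind_numerator_def by (simp add: field_simps)
  finally show ?thesis using assms by simp
qed

lemma dedekind_numerator_add_multiple:
  fixes a j K :: int
  assumes "K \<ge> 0"
  shows "dedekind_numerator (a + K * j) K = dedekind_numerator a K"
proof -
  have "floor_sum (a + K * j) K = (\<Sum>x\<in>{1..<K}. x * (a * x div K) + j * x^2)"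
    unfolding floor_sum_def
  proof (rule sum.cong)
    fix x assume "x \<in> {1..<K}"
    then have "(a + K * j) * x div K = a * x div K + j * x"
      by (simp add: algebra_simps)
    then show "x * ((a + K * j) * x div K) = x * (a * x div K) + j * x^2"
      by (simp add: algebra_simps power2_eq_square)
  qed simp
  then have "12 * floor_sum (a + K * j) K = 12 * floor_sum a K + 2 * j * (6 * (\<Sum>x\<in>{1..<K}. x^2))"
    by (simp add: floor_sum_def sum.distrib sum_distrib_left)
  then show ?thesis
    unfolding dedekind_numerator_def sum_atLeastLessThan_int_square[OF assms] by (simp add: algebra_simps)
qed

lemma le_div_iff_mult_le_int:
  fixes K s y :: int
  assumes "K > 0"
  shows "s \<le> y div K \<longleftrightarrow> s * K \<le> y"
  using assms by (smt (verit) minus_div_mult_eq_mod nonzero_mult_div_cancel_right pos_mod_sign zdiv_mono1)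

lemma mult_div_bounds:
  fixes a x K :: int
  assumes "a > 0" "0 \<le> x" "x < K"
  shows "0 \<le> a * x div K" "a * x div K < a"
proof -
  have "K > 0" using assms by simp
  then show "0 \<le> a * x div K"
    using assms by (simp add: pos_imp_zdiv_nonneg_iff)
  show "a * x div K < a"
    using le_div_iff_mult_le_int[OF \<open>K > 0\<close>, of a "a * x"] assms by (simp add: mult.commute)
qed

lemma sum_mult_mod_permute:
  fixes a K :: int
  assumes "coprime a K"
  shows "(\<Sum>x\<in>{1..<K}. g (a * x mod K)) = (\<Sum>x\<in>{1..<K}. g x)"
  using sum.reindex_bij_betw[OF bij_betw_int_remainders_mult[OF assms]] .

lemma sum_mult_div:
  fixes a K :: int
  assumes "coprime a K" "K > 0"
  shows "2 * (\<Sum>x\<in>{1..<K}. a * x div K) = (a - 1) * (K - 1)"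
proof -
  define S where "S = (\<Sum>x\<in>{1..<K}. x)"
  define G where "G = (\<Sum>x\<in>{1..<K}. a * x div K)"
  have "S = (\<Sum>x\<in>{1..<K}. a * x mod K)"
    unfolding S_def using sum_mult_mod_permute[OF assms(1), of id] by simp
  also have "\<dots> = a * S - K * G"
    unfolding S_def G_def minus_div_mult_eq_mod[symmetric]
    by (simp add: sum_subtractf sum_distrib_left algebra_simps)
  finally have "K * (2 * G) = (a - 1) * (2 * S)" by (simp add: algebra_simps)
  also have "\<dots> = K * ((a - 1) * (K - 1))"
    unfolding S_def sum_atLeastLessThan_int_id[OF less_imp_le[OF assms(2)]] by (simp add: algebra_simps)
  finally show ?thesis using assms(2) unfolding G_def by simp
qed

lemma sum_mult_div_square:
  fixes a K :: int
  assumes "coprime a K"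
  shows "K^2 * (\<Sum>x\<in>{1..<K}. (a * x div K)^2)
    = (1 - a^2) * (\<Sum>x\<in>{1..<K}. x^2) + 2 * a * K * floor_sum a K"
proof -
  have "(\<Sum>x\<in>{1..<K}. x^2) = (\<Sum>x\<in>{1..<K}. (a * x mod K)^2)"
    using sum_mult_mod_permute[OF assms, of "\<lambda>x. x^2"] by simp
  also have "\<dots> = (\<Sum>x\<in>{1..<K}. (a * x - K * (a * x div K))^2)"
    by (simp add: minus_div_mult_eq_mod[symmetric] algebra_simps)
  also have "\<dots> = a^2 * (\<Sum>x\<in>{1..<K}. x^2) - 2 * a * K * floor_sum a K
      + K^2 * (\<Sum>x\<in>{1..<K}. (a * x div K)^2)"
    unfolding floor_sum_def
    by (simp add: power2_eq_square algebra_simps sum.distrib sum_subtractf sum_distrib_left)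
  finally show ?thesis by (simp add: algebra_simps)
qed

lemma square_eq_sum_odd_below:
  fixes n N :: int
  assumes "0 \<le> n" "n < N"
  shows "n^2 = (\<Sum>s\<in>{1..<N}. if s \<le> n then 2 * s - 1 else 0)"
proof -
  have "(\<Sum>s\<in>{1..<N}. if s \<le> n then 2 * s - 1 else 0)
      = (\<Sum>s\<in>{s\<in>{1..<N}. s \<le> n}. 2 * s - 1)"
    using sum.inter_filter[of "{1..<N}" "\<lambda>s. 2 * s - 1" "\<lambda>s. s \<le> n"] by simp
  also have "{s\<in>{1..<N}. s \<le> n} = {1..n}" using assms by auto
  finally show ?thesis using sum_atLeastAtMost_int_odd[OF assms(1)] by simp
qed

(* Both sides count the lattice points (x, s) with 0 < x < K and 0 < s <= a x / K,
   weighting (x, s) by 2s - 1. *)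

lemma sum_mult_div_square_swap:
  fixes a K :: int
  assumes a: "a > 0" and K: "K > 0" and cop: "coprime a K"
  shows "(\<Sum>x\<in>{1..<K}. (a * x div K)^2)
    = (K - 1) * (a - 1)^2 - 2 * floor_sum K a + (\<Sum>s\<in>{1..<a}. K * s div a)"
proof -
  have swap: "s \<le> a * x div K \<longleftrightarrow> K * s div a < x"
    if x: "x \<in> {1..<K}" and "s \<in> {1..<a}" for x s
  proof -
    have "\<not> K dvd x" using x zdvd_imp_le[of K x] by auto
    then have "a * x \<noteq> K * s"
      using cop by (metis coprime_commute coprime_dvd_mult_right_iff dvd_triv_left)
    then show ?thesis
      using le_div_iff_mult_le_int[OF K, of s "a * x"] le_div_iff_mult_le_int[OF a, of x "K * s"]
      by (auto simp: algebra_simps)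
  qed
  have "(\<Sum>x\<in>{1..<K}. (a * x div K)^2)
      = (\<Sum>x\<in>{1..<K}. \<Sum>s\<in>{1..<a}. if s \<le> a * x div K then 2 * s - 1 else 0)"
    using mult_div_bounds[OF a] by (intro sum.cong square_eq_sum_odd_below) auto
  also have "\<dots> = (\<Sum>s\<in>{1..<a}. \<Sum>x\<in>{1..<K}. if K * s div a < x then 2 * s - 1 else 0)"
    by (subst sum.swap) (intro sum.cong refl, use swap in auto)
  also have "\<dots> = (\<Sum>s\<in>{1..<a}. (2 * s - 1) * (K - 1 - K * s div a))"
  proof (rule sum.cong)
    fix s assume "s \<in> {1..<a}"
    then have "0 \<le> K * s div a" "K * s div a < K" using mult_div_bounds[OF K, of s a] by auto
    then have "{x\<in>{1..<K}. K * s div a < x} = {K * s div a + 1..<K}" by auto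
    then show "(\<Sum>x\<in>{1..<K}. if K * s div a < x then 2 * s - 1 else 0)
        = (2 * s - 1) * (K - 1 - K * s div a)"
      using \<open>0 \<le> K * s div a\<close> \<open>K * s div a < K\<close> by (simp add: sum.inter_filter[symmetric])
  qed simp
  also have "\<dots> = (K - 1) * (\<Sum>s\<in>{1..<a}. 2 * s - 1) - 2 * floor_sum K a
      + (\<Sum>s\<in>{1..<a}. K * s div a)"
    unfolding floor_sum_def by (simp add: algebra_simps sum.distrib sum_subtractf sum_distrib_left)
  also have "(\<Sum>s\<in>{1..<a}. 2 * s - 1) = (a - 1)^2"
    using sum_atLeastAtMost_int_odd[of "a - 1"] a atLeastLessThanPlusOne_atLeastAtMost_int[of 1 "a - 1"] by simp
  finally show ?thesis .
qed

lemma floor_sum_reciprocity: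
  fixes a K :: int
  assumes a: "a > 0" and K: "K > 0" and cop: "coprime a K"
  shows "12 * a * floor_sum a K + 12 * K * floor_sum K a =
    6 * K * (K - 1) * (a - 1)^2 + 3 * K * (K - 1) * (a - 1) + (a^2 - 1) * (K - 1) * (2 * K - 1)"
proof -
  define F where "F = (\<Sum>x\<in>{1..<K}. (a * x div K)^2)"
  define G where "G = (\<Sum>s\<in>{1..<a}. K * s div a)"
  have G: "2 * G = (K - 1) * (a - 1)"
    unfolding G_def using sum_mult_div[of K a] cop a by (simp add: coprime_commute)
  have "K * (12 * a * floor_sum a K) = 6 * (K^2 * F) - (1 - a^2) * (6 * (\<Sum>x\<in>{1..<K}. x^2))"
    unfolding F_def sum_mult_div_square[OF cop] by (simp add: algebra_simps power2_eq_square)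
  also have "\<dots> = 6 * K^2 * ((K - 1) * (a - 1)^2 - 2 * floor_sum K a) + 3 * K^2 * (2 * G)
      + (a^2 - 1) * ((K - 1) * K * (2 * K - 1))"
    unfolding F_def G_def sum_mult_div_square_swap[OF assms]
      sum_atLeastLessThan_int_square[OF less_imp_le[OF K]]
    by (simp add: algebra_simps)
  also have "\<dots> = K * (6 * K * (K - 1) * (a - 1)^2 + 3 * K * (K - 1) * (a - 1)
      + (a^2 - 1) * (K - 1) * (2 * K - 1) - 12 * K * floor_sum K a)"
    unfolding G by (simp add: algebra_simps power2_eq_square)
  finally have "12 * a * floor_sum a K = 6 * K * (K - 1) * (a - 1)^2 + 3 * K * (K - 1) * (a - 1)
      + (a^2 - 1) * (K - 1) * (2 * K - 1) - 12 * K * floor_sum K a"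
    using K by simp
  then show ?thesis by simp
qed

definition numerator_residue :: "int \<Rightarrow> int \<Rightarrow> int \<Rightarrow> int" where
  "numerator_residue a a' K = 2 * a * (K - 1) * (2 * K - 1) - 3 * K * (K - 1)
     + a' * (6 * K * (K - 1) * (a - 1)^2 + 3 * K * (K - 1) * (a - 1) + (a^2 - 1) * (K - 1) * (2 * K - 1))"

lemma dedekind_numerator_cong:
  fixes a a' K :: int
  assumes a: "a > 0" and K: "K > 0" and inv: "[a * a' = -1] (mod K)"
  shows "[dedekind_numerator a K = numerator_residue a a' K] (mod 12 * K)"
proof -
  obtain q where q: "a * a' = K * q - 1"
    using inv by (metis cong_iff_lin cong_sym diff_minus_eq_add minus_diff_eq uminus_add_conv_diff)
  have "[a * (- a') = 1] (mod K)"
    using q by (auto simp: cong_iff_lin algebra_simps)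
  then have "coprime a K"
    using coprime_iff_invertible_int by blast
  note rec = floor_sum_reciprocity[OF a K this]
  have "12 * floor_sum a K = 12 * K * q * floor_sum a K - (a * a') * (12 * floor_sum a K)"
    unfolding q by (simp add: algebra_simps)
  also have "\<dots> = 12 * K * (q * floor_sum a K + a' * floor_sum K a)
      - a' * (12 * a * floor_sum a K + 12 * K * floor_sum K a)"
    by (simp add: algebra_simps)
  finally have "12 * floor_sum a K = \<dots>" .
  then show ?thesis
    unfolding cong_iff_lin dedekind_numerator_def numerator_residue_def rec
    by (intro exI[of _ "q * floor_sum a K + a' * floor_sum K a"]) (simp add: algebra_simps)
qed

lemma floor_sum_atLeast0:
  "floor_sum a K = (\<Sum>x\<in>{0..<K}. x * (a * x div K))"
proof (cases "K \<ge> 1")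
  case True
  then have "{0..<K} = insert 0 {1..<K}" by auto
  then show ?thesis unfolding floor_sum_def by simp
qed (simp add: floor_sum_def)

lemma sum_atLeastLessThan_int_shift:
  fixes d m :: int
  shows "(\<Sum>y\<in>{d..<d+m}. f y) = (\<Sum>x\<in>{0..<m}. f (x + d))"
proof -
  have "(\<lambda>x. x + d) ` {0..<m} = {d..<d+m}" by (simp add: add.commute)
  moreover have "inj_on (\<lambda>x. x + d) {0..<m}" by (simp add: inj_on_def)
  ultimately show ?thesis using sum.reindex[of "\<lambda>x. x + d" "{0..<m}" f] by (simp add: o_def)
qed

lemma sum_atLeastLessThan_int_thirds:
  fixes m :: int
  assumes "m \<ge> 0"
  shows "(\<Sum>y\<in>{0..<3*m}. f y) = (\<Sum>x\<in>{0..<m}. f x + f (x + m) + f (x + 2*m))"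
proof -
  have "{0..<3*m} = ({0..<m} \<union> {m..<m+m}) \<union> {2*m..<2*m+m}" using assms by auto
  also have "sum f \<dots> = sum f ({0..<m} \<union> {m..<m+m}) + sum f {2*m..<2*m+m}"
    by (rule sum.union_disjoint) auto
  also have "sum f ({0..<m} \<union> {m..<m+m}) = sum f {0..<m} + sum f {m..<m+m}"
    by (rule sum.union_disjoint) auto
  finally show ?thesis
    unfolding sum_atLeastLessThan_int_shift by (simp add: sum.distrib)
qed

(* d, d + a and d + 2a run through all residues modulo 3. *)

lemma div3_add_shifts:
  fixes a d :: int
  assumes "\<not> 3 dvd a"
  shows "d div 3 + (d + a) div 3 + (d + 2*a) div 3 = d + a - 1"
proof -
  define b c e f where "b = a div 3" "c = a mod 3" "e = d div 3" "f = d mod 3"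
  have a: "a = 3*b + c" and d: "d = 3*e + f" unfolding b_c_e_f_def by simp_all
  have c: "c = 1 \<or> c = 2" using assms unfolding b_c_e_f_def by (auto simp: dvd_eq_mod_eq_0)
  have f: "f = 0 \<or> f = 1 \<or> f = 2" unfolding b_c_e_f_def by auto
  have "d div 3 = e + f div 3" "(d + a) div 3 = e + b + (f + c) div 3"
    "(d + 2*a) div 3 = e + 2*b + (f + 2*c) div 3"
    unfolding d a by (simp_all add: algebra_simps)
  then show ?thesis using c f a d by auto
qed

lemma div_add_shifts_thirds:
  fixes a m x :: int
  assumes "m > 0" "\<not> 3 dvd a"
  shows "a*x div (3*m) + a*(x+m) div (3*m) + a*(x+2*m) div (3*m) = a*x div m + a - 1"
proof -
  have shift: "a*(x + j*m) div (3*m) = (a*x div m + a*j) div 3" for j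
  proof -
    have "a*(x + j*m) div (3*m) = a*(x + j*m) div m div 3"
      by (metis mult.commute zdiv_zmult2_eq zero_le_numeral)
    moreover have "a*(x + j*m) = a*x + (a*j) * m" by (simp add: algebra_simps)
    ultimately show ?thesis using assms(1) by simp
  qed
  show ?thesis
    using shift[of 0] shift[of 1] shift[of 2] div3_add_shifts[OF assms(2), of "a*x div m"]
    by (simp add: mult.commute)
qed

lemma floor_sum_triple:
  fixes a m :: int
  assumes m: "m > 0" and a: "\<not> 3 dvd a"
  shows "floor_sum a (3*m) = floor_sum a m + (a - 1) * (\<Sum>x\<in>{0..<m}. x)
     + m * (\<Sum>x\<in>{0..<m}. a*(x+m) div (3*m)) + 2*m * (\<Sum>x\<in>{0..<m}. a*(x+2*m) div (3*m))"
proof -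
  have "floor_sum a (3*m) = (\<Sum>x\<in>{0..<m}. x * (a*x div (3*m) + a*(x+m) div (3*m) + a*(x+2*m) div (3*m))
        + m * (a*(x+m) div (3*m)) + 2*m * (a*(x+2*m) div (3*m)))"
    unfolding floor_sum_atLeast0 using m
    by (subst sum_atLeastLessThan_int_thirds) (simp_all add: algebra_simps)
  also have "\<dots> = (\<Sum>x\<in>{0..<m}. x * (a*x div m) + (a - 1) * x + m * (a*(x+m) div (3*m))
        + 2*m * (a*(x+2*m) div (3*m)))"
    unfolding div_add_shifts_thirds[OF assms] by (simp add: algebra_simps)
  also have "\<dots> = floor_sum a m + (a - 1) * (\<Sum>x\<in>{0..<m}. x)
     + m * (\<Sum>x\<in>{0..<m}. a*(x+m) div (3*m)) + 2*m * (\<Sum>x\<in>{0..<m}. a*(x+2*m) div (3*m))"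
    unfolding floor_sum_atLeast0 by (simp add: sum.distrib sum_distrib_left)
  finally show ?thesis .
qed

(* (2y + N) div (2N) is y / N rounded to the nearest integer. *)

lemma even_div_add_double_div:
  fixes N y :: int
  assumes N: "N > 0"
  shows "even (y div N + (2*y) div N - (2*y + N) div (2*N))"
proof -
  define d r where "d = y div N" "r = y mod N"
  have y: "y = N * d + r" unfolding d_r_def by simp
  have r: "0 \<le> r" "r < N" unfolding d_r_def using N by auto
  have "(2*y) div N = 2*d + (2*r) div N"
  proof -
    have "2*y = 2*r + (2*d) * N" unfolding y by (simp add: algebra_simps)
    then show ?thesis using N by simp
  qed
  moreover have "(2*y + N) div (2*N) = d + (2*r + N) div (2*N)"
  proof -
    have "(2*y + N) div (2*N) = ((2*r + N) + d * (2*N)) div (2*N)"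
      unfolding y by (simp add: algebra_simps)
    also have "\<dots> = d + (2*r + N) div (2*N)"
      using N by (simp only: div_mult_self1)
    finally show ?thesis .
  qed
  moreover have "(2*r) div N = (2*r + N) div (2*N)"
  proof (cases "2*r < N")
    case True
    then show ?thesis using r by (simp add: div_pos_pos_trivial)
  next
    case False
    have "(2*r) div N = (2*r - N) div N + 1" "(2*r + N) div (2*N) = (2*r - N) div (2*N) + 1"
      using False N by (simp_all add: div_pos_geq)
    then show ?thesis using False r by simp
  qed
  ultimately show ?thesis unfolding d_r_def[symmetric] by simp
qed

(* The summands for x and m - x add up to h. *)

lemma sum_round_div_thirds:
  fixes h m u :: int
  assumes m: "m = 2*u+1" and u: "u \<ge> 0"
  shows "(\<Sum>x\<in>{0..<m}. (2*h*(x+m) + 3*m) div (6*m)) = h*u + (2*h+3) div 6"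
proof -
  define M where "M x = (2*h*(x+m) + 3*m) div (6*m)" for x
  have mpos: "m > 0" using m u by simp
  have M0: "M 0 = (2*h+3) div 6"
  proof -
    have "2*h*(0+m) + 3*m = (2*h+3)*m" by (simp add: algebra_simps)
    then show ?thesis unfolding M_def using mpos by (simp add: div_mult_mult2)
  qed
  have pair: "M x + M (m - x) = h" for x
  proof -
    define z where "z = 2*h*(x+m) + 3*m"
    have "odd z" unfolding z_def m by simp
    then have "\<not> 6*m dvd z"
      using dvd_trans[of 2 "6*m" z] by auto
    have "2*h*((m - x)+m) + 3*m = (- z) + (h+1) * (6*m)" unfolding z_def by (simp add: algebra_simps)
    then have "M (m - x) = (h+1) + (- z) div (6*m)"
      unfolding M_def using div_mult_self1[of "6*m" "- z" "h+1"] mpos by simp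
    also have "(- z) div (6*m) = - (z div (6*m)) - 1"
      using \<open>\<not> 6*m dvd z\<close> mpos by (simp add: zdiv_zminus1_eq_if dvd_eq_mod_eq_0)
    finally show ?thesis unfolding M_def z_def by simp
  qed
  have "{0..<m} = insert 0 {1..<m}" using mpos by auto
  then have S: "(\<Sum>x\<in>{0..<m}. M x) = M 0 + (\<Sum>x\<in>{1..<m}. M x)" by simp
  have "(\<Sum>x\<in>{1..<m}. M x) = (\<Sum>x\<in>{1..<m}. M (m - x))"
    by (rule sum.reindex_bij_witness[where i="\<lambda>x. m - x" and j="\<lambda>x. m - x"]) auto
  then have "2 * (\<Sum>x\<in>{1..<m}. M x) = (\<Sum>x\<in>{1..<m}. M x + M (m - x))"
    by (simp add: sum.distrib)
  also have "\<dots> = 2 * (h * u)" using pair mpos by (simp add: m)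
  finally show ?thesis using S M0 unfolding M_def by simp
qed

lemma floor_sums_parity:
  fixes h m :: int
  assumes m: "odd m" "m > 0" and h: "\<not> 3 dvd h"
  shows "even (floor_sum h m + floor_sum (2*h) m + floor_sum h (3*m) + floor_sum (2*h) (3*m) + h + 1)"
proof -
  obtain u where u: "m = 2*u+1" using m(1) by (rule oddE)
  with m(2) have "u \<ge> 0" by simp
  have h2: "\<not> 3 dvd 2*h" using h by presburger
  define A1 where "A1 = (\<Sum>x\<in>{0..<m}. h*(x+m) div (3*m))"
  define B1 where "B1 = (\<Sum>x\<in>{0..<m}. 2*h*(x+m) div (3*m))"
  define A2 where "A2 = (\<Sum>x\<in>{0..<m}. h*(x+2*m) div (3*m))"
  define B2 where "B2 = (\<Sum>x\<in>{0..<m}. 2*h*(x+2*m) div (3*m))"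
  have "{0..<m} = insert 0 {1..<m}" using m(2) by auto
  then have "2 * (\<Sum>x\<in>{0..<m}. x) = m * (m - 1)"
    using sum_atLeastLessThan_int_id[of m] m(2) by simp
  then have Sx: "(\<Sum>x\<in>{0..<m}. x) = (2*u+1)*u" unfolding u by (simp add: algebra_simps)
  have "even (A1 + B1 - (h*u + (2*h+3) div 6))"
    unfolding sum_round_div_thirds[OF u \<open>u \<ge> 0\<close>, symmetric]
    unfolding A1_def B1_def sum.distrib[symmetric] sum_subtractf[symmetric]
    using even_div_add_double_div[of "3*m" "h*_"] m(2) by (intro dvd_sum) (simp add: mult.assoc)
  moreover have "even ((2*h+3) div 6 - h - 1)" using h by presburger
  ultimately have "even ((A1 + B1 - (h*u + (2*h+3) div 6)) + ((2*h+3) div 6 - h - 1))"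
    by (rule dvd_add)
  then obtain w where "(A1 + B1 - (h*u + (2*h+3) div 6)) + ((2*h+3) div 6 - h - 1) = 2*w"
    by (rule evenE)
  then have w: "A1 = h*u + h + 1 + 2*w - B1" by simp
  have "floor_sum h m + floor_sum (2*h) m + floor_sum h (3*m) + floor_sum (2*h) (3*m) + h + 1
     = 2 * (floor_sum h m + floor_sum (2*h) m + m*(A2 + B2) + (3*h-2)*u^2 + h*u - u
            + u*(h*u + h + 1 + 2*w) + h*u + h + 1 + w)"
    unfolding floor_sum_triple[OF m(2) h] floor_sum_triple[OF m(2) h2] Sx
      A1_def[symmetric] A2_def[symmetric] B1_def[symmetric] B2_def[symmetric] w
    by (simp add: u algebra_simps power2_eq_square)
  then show ?thesis by (simp only:) simp
qed

definition first_exponent :: "int \<Rightarrow> int \<Rightarrow> int \<Rightarrow> int" where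
  "first_exponent k h h' = -9 * k + 9 * k ^ 2 + h * (-9 + 5 * k ^ 2) - 2 * k ^ 2 * h'"

definition second_exponent :: "int \<Rightarrow> int \<Rightarrow> int \<Rightarrow> int" where
  "second_exponent k h h' = 3 * k ^ 2 + h * (9 + k ^ 2) - k ^ 2 * h'"

(* By dedekind_sum_eq_numerator, first_defect m h h' is
   108 m (s(2h,m) + s(2h,3m) + s(h,3m) - s(h,m) - 1) + 2 first_exponent (3m) h h',
   and similarly for second_defect; the identities amount to their divisibility by 216 m. *)

definition first_defect :: "int \<Rightarrow> int \<Rightarrow> int \<Rightarrow> int" where
  "first_defect m h h' = 9 * (dedekind_numerator (2*h) m - dedekind_numerator h m)
     + 3 * (dedekind_numerator (2*h) (3*m) + dedekind_numerator h (3*m)) - 108 * m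
     + 2 * first_exponent (3*m) h h'"

definition second_defect :: "int \<Rightarrow> int \<Rightarrow> int \<Rightarrow> int" where
  "second_defect m h h' = 9 * (dedekind_numerator h m - 3 * dedekind_numerator (2*h) m)
     + 3 * (dedekind_numerator (2*h) (3*m) + dedekind_numerator h (3*m)) - 108 * m
     + 4 * second_exponent (3*m) h h'"

lemma not_3_dvd_if_inverse:
  fixes h h' m :: int
  assumes "[h * h' = -1] (mod 3*m)"
  shows "\<not> 3 dvd h"
proof
  assume "3 dvd h"
  moreover have "3 dvd h * h' + 1"
    using assms by (auto simp: cong_iff_dvd_diff intro: dvd_trans[of 3 "3*m"])
  ultimately have "3 dvd (1::int)" by (metis dvd_add_right_iff dvd_mult2)
  then show False by simp
qed

lemma defects_dvd_108m:
  fixes h h' m :: int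
  assumes h: "h > 0" and m: "m > 0" "odd m" and h': "even h'" and inv: "[h * h' = -1] (mod 3*m)"
  shows "108*m dvd first_defect m h h'" "108*m dvd second_defect m h h'"
proof -
  obtain g where g: "h' = 2*g" using h' by (rule evenE)
  have inv2: "[(2*h) * g = -1] (mod 3*m)" using inv g by (simp add: mult.assoc mult.left_commute)
  have inv_m: "[h * h' = -1] (mod m)" "[(2*h) * g = -1] (mod m)"
    using inv inv2 by (auto intro: cong_dvd_modulus)
  obtain t1 t2 t3 t4 where
    t: "dedekind_numerator h (3*m) = numerator_residue h h' (3*m) - 12 * (3*m) * t1"
      "dedekind_numerator (2*h) (3*m) = numerator_residue (2*h) g (3*m) - 12 * (3*m) * t2"
      "dedekind_numerator h m = numerator_residue h h' m - 12 * m * t3"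
      "dedekind_numerator (2*h) m = numerator_residue (2*h) g m - 12 * m * t4"
    using dedekind_numerator_cong[OF h _ inv] dedekind_numerator_cong[OF _ _ inv2]
      dedekind_numerator_cong[OF h _ inv_m(1)] dedekind_numerator_cong[OF _ _ inv_m(2)] h m(1)
    unfolding cong_iff_lin by (fastforce simp: algebra_simps)
  obtain q where q: "h * h' + 1 = 3 * m * q"
  proof -
    obtain k where "-1 = h * h' + 3 * m * k" using inv unfolding cong_iff_lin by blast
    then show thesis by (intro that[of "-k"]) simp
  qed
  then have "3 * m * q = 2 * (h * g) + 1" using g by simp
  then have "odd (3 * m * q)" by (metis even_plus_one_iff dvd_triv_left)
  then have "even (q - 5 * m)" using m(2) by simp
  then obtain c where "q - 5 * m = 2 * c" by (rule evenE)
  then have c: "q = 5 * m + 2 * c" by simp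
  have "first_defect m h h' = 108 * m * (-1 - 2*h + 3*h*g - 9*h*g*m - 6*h^2*g + 20*h*m^2*q + h*c
      - t4 + t3 - t2 - t1) + (18*h + 720*h*m^2) * (h * h' + 1 - 3 * m * q)"
    unfolding first_defect_def first_exponent_def t numerator_residue_def c g
    by (simp add: algebra_simps power2_eq_square)
  then show "108*m dvd first_defect m h h'" using q by simp
  have "second_defect m h h' = 108 * m * (-h*q - 1 + h - h*m - 6*h*g*m + 3*h^2*g + 8*h*m^2*q
      + 3*t4 - t3 - t2 - t1) + (288*h*m^2 - 36*h) * (h * h' + 1 - 3 * m * q)"
    unfolding second_defect_def second_exponent_def t numerator_residue_def g
    by (simp add: algebra_simps power2_eq_square)
  then show "108*m dvd second_defect m h h'" using q by simp
qed

lemma defects_dvd_8: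
  fixes h h' m :: int
  assumes m: "m > 0" "odd m" and h': "even h'" and h: "\<not> 3 dvd h"
  shows "8 dvd first_defect m h h'" "8 dvd second_defect m h h'"
proof -
  obtain u where u: "m = 2*u + 1" using m(2) by (rule oddE)
  obtain g where g: "h' = 2*g" using h' by (rule evenE)
  define T1 T2 T3 T4 where "T1 = floor_sum h (3*m)" "T2 = floor_sum (2*h) (3*m)"
    "T3 = floor_sum h m" "T4 = floor_sum (2*h) m"
  obtain j where j: "T3 + T4 + T1 + T2 + h + 1 = 2*j"
    using floor_sums_parity[OF m(2,1) h] unfolding T1_T2_T3_T4_def by (rule evenE)
  have "first_defect m h h' = 8 * (-14 - 27*u - 9*g - 36*g*u - 36*g*u^2 + 31*h + 171*h*u + 225*h*u^2
      - 5*T1 - 5*T2 + 13*T3 - 14*T4) + 4 * (T3 + T4 + T1 + T2 + h + 1)"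
    unfolding first_defect_def first_exponent_def dedekind_numerator_def T1_T2_T3_T4_def g u
    by (simp add: algebra_simps power2_eq_square)
  then show "8 dvd first_defect m h h'" unfolding j by simp
  have "second_defect m h h' = 8 * (-14 - 27*u - 9*g - 36*g*u - 36*g*u^2 + 31*h + 117*h*u + 90*h*u^2
      - 5*T1 - 5*T2 - 14*T3 + 40*T4) + 4 * (T3 + T4 + T1 + T2 + h + 1)"
    unfolding second_defect_def second_exponent_def dedekind_numerator_def T1_T2_T3_T4_def g u
    by (simp add: algebra_simps power2_eq_square)
  then show "8 dvd second_defect m h h'" unfolding j by simp
qed

lemma dvd_216_mult_if_odd:
  fixes m D :: int
  assumes "odd m" "108 * m dvd D" "8 dvd D"
  shows "216 * m dvd D"
proof -
  obtain Z where Z: "D = 108 * m * Z" using assms(2) by (rule dvdE)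
  have "4 * 2 dvd 4 * (27 * (m * Z))" using assms(3) unfolding Z by (simp add: mult.assoc)
  then have "even (27 * (m * Z))" by (rule zdvd_mult_cancel) simp
  then have "even (m * Z)" by simp
  then have "even Z" using assms(1) by simp
  then show ?thesis unfolding Z by (auto elim!: evenE)
qed

lemma defects_dvd_216m:
  fixes h h' m :: int
  assumes m: "m > 0" "odd m" and h': "even h'" and inv: "[h * h' = -1] (mod 3*m)"
  shows "216*m dvd first_defect m h h'" "216*m dvd second_defect m h h'"
proof -
  define r j where "r = h mod (108*m)" "j = h div (108*m)"
  have "h = r + 108 * m * j" unfolding r_j_def by simp
  then have hr: "h = r + m * (108*j)" "2*h = 2*r + m * (216*j)"
    "h = r + (3*m) * (36*j)" "2*h = 2*r + (3*m) * (72*j)"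
    by (simp_all add: algebra_simps)
  have "[r = h] (mod 3*m)"
    unfolding r_j_def by (rule cong_dvd_modulus[of _ _ "108*m"]) (simp_all add: cong_def)
  then have inv_r: "[r * h' = -1] (mod 3*m)"
    using inv by (metis cong_scalar_right cong_trans)
  have "r \<ge> 0" unfolding r_j_def using m by simp
  moreover have "r \<noteq> 0" using not_3_dvd_if_inverse[OF inv_r] by auto
  ultimately have "r > 0" by simp
  have N: "dedekind_numerator h m = dedekind_numerator r m"
    "dedekind_numerator (2*h) m = dedekind_numerator (2*r) m"
    "dedekind_numerator h (3*m) = dedekind_numerator r (3*m)"
    "dedekind_numerator (2*h) (3*m) = dedekind_numerator (2*r) (3*m)"
  proof -
    show "dedekind_numerator h m = dedekind_numerator r m"
      by (subst hr(1), rule dedekind_numerator_add_multiple) (use m(1) in simp)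
    show "dedekind_numerator (2*h) m = dedekind_numerator (2*r) m"
      by (subst hr(2), rule dedekind_numerator_add_multiple) (use m(1) in simp)
    show "dedekind_numerator h (3*m) = dedekind_numerator r (3*m)"
      by (subst hr(3), rule dedekind_numerator_add_multiple) (use m(1) in simp)
    show "dedekind_numerator (2*h) (3*m) = dedekind_numerator (2*r) (3*m)"
      by (subst hr(4), rule dedekind_numerator_add_multiple) (use m(1) in simp)
  qed
  have "first_defect m h h' = first_defect m r h' + 216 * m * (j * (-9 + 45 * m^2))"
    "second_defect m h h' = second_defect m r h' + 216 * m * (2 * j * (9 + 9 * m^2))"
    unfolding first_defect_def second_defect_def N
    unfolding first_exponent_def second_exponent_def hr(1)
    by (simp_all add: algebra_simps power2_eq_square)
  moreover have "216*m dvd first_defect m r h'" "216*m dvd second_defect m r h'"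
    using defects_dvd_108m[OF \<open>r > 0\<close> m h' inv_r]
      defects_dvd_8[OF m h' not_3_dvd_if_inverse[OF inv_r]]
    by (simp_all add: dvd_216_mult_if_odd[OF m(2)])
  ultimately show "216*m dvd first_defect m h h'" "216*m dvd second_defect m h h'"
    by simp_all
qed

lemma dedekind_sum_combinations:
  fixes m :: nat and h h' :: int
  assumes m: "odd m" and h': "even h'" and inv: "[h * h' = -1] (mod int (3*m))"
  shows "\<exists>n::int. dedekind_sum (2*h) m + dedekind_sum (2*h) (3*m) + dedekind_sum h (3*m)
      - dedekind_sum h m = 1 - of_int (first_exponent (int (3*m)) h h') / (54 * real m) + 2 * of_int n"
      (is ?first)
    and "\<exists>n::int. dedekind_sum h m + dedekind_sum (2*h) (3*m) + dedekind_sum h (3*m)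
      - 3 * dedekind_sum (2*h) m = 1 - of_int (second_exponent (int (3*m)) h h') / (27 * real m) + 2 * of_int n"
      (is ?second)
proof -
  have "m > 0" using m by (rule odd_pos)
  have "odd (int m)" "[h * h' = -1] (mod 3 * int m)" using m inv by simp_all
  note dvd = defects_dvd_216m[of "int m", OF _ this(1) h' this(2)]
  have N: "of_int (dedekind_numerator a (int m)) = 12 * real m * dedekind_sum a m"
    "of_int (dedekind_numerator a (3 * int m)) = 36 * real m * dedekind_sum a (3*m)" for a
    using dedekind_sum_eq_numerator[of m a] dedekind_sum_eq_numerator[of "3*m" a] \<open>m > 0\<close>
    by simp_all
  obtain n1 where "first_defect (int m) h h' = 216 * int m * n1"
    using dvd(1) \<open>m > 0\<close> by (auto elim: dvdE)
  moreover have "real_of_int (first_defect (int m) h h') = 108 * real m * (dedekind_sum (2*h) m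
      + dedekind_sum (2*h) (3*m) + dedekind_sum h (3*m) - dedekind_sum h m - 1)
      + 2 * of_int (first_exponent (int (3*m)) h h')"
    unfolding first_defect_def of_int_add of_int_diff of_int_mult N by (simp add: algebra_simps)
  ultimately show ?first
    using \<open>m > 0\<close> by (intro exI[of _ n1]) (simp add: field_simps)
  obtain n2 where "second_defect (int m) h h' = 216 * int m * n2"
    using dvd(2) \<open>m > 0\<close> by (auto elim: dvdE)
  moreover have "real_of_int (second_defect (int m) h h') = 108 * real m * (dedekind_sum h m
      + dedekind_sum (2*h) (3*m) + dedekind_sum h (3*m) - 3 * dedekind_sum (2*h) m - 1)
      + 4 * of_int (second_exponent (int (3*m)) h h')"
    unfolding second_defect_def of_int_add of_int_diff of_int_mult N by (simp add: algebra_simps)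
  ultimately show ?second
    using \<open>m > 0\<close> by (intro exI[of _ n2]) (simp add: field_simps)
qed

lemma omega_quotient_odd_shift:
  fixes x :: real and n :: int and j :: nat
  assumes "dedekind_sum a K + dedekind_sum b L + dedekind_sum c M - of_nat j * dedekind_sum d N
    = 1 - x + 2 * of_int n"
  shows "omega a K * omega b L * omega c M / omega d N ^ j
    = - exp (- (complex_of_real pi * \<i> * complex_of_real x))"
proof -
  have "omega d N ^ j = exp (complex_of_real pi * \<i> * complex_of_real (of_nat j * dedekind_sum d N))"
    unfolding omega_def by (simp add: exp_of_nat_mult[symmetric] algebra_simps)
  then have "omega a K * omega b L * omega c M / omega d N ^ j
      = exp (complex_of_real pi * \<i> * complex_of_real (1 - x + 2 * of_int n))"
    unfolding assms[symmetric] omega_def by (simp add: distrib_left right_diff_distrib exp_add exp_diff)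
  also have "\<dots> = exp ((- (complex_of_real pi * \<i> * complex_of_real x) + pi * \<i>)
      + \<i> * (of_int n * (of_real pi * 2)))"
    by (intro arg_cong[where f=exp]) (simp add: algebra_simps)
  also have "\<dots> = exp (- (complex_of_real pi * \<i> * complex_of_real x) + pi * \<i>)"
    by (rule exp_plus_2pin)
  also have "\<dots> = - exp (- (complex_of_real pi * \<i> * complex_of_real x))"
    unfolding exp_add by simp
  finally show ?thesis .
qed

lemma omega_quotients:
  fixes m :: nat and h h' :: int
  assumes "odd m" "even h'" "[h * h' = -1] (mod int (3*m))"
  shows "omega (2*h) m * omega (2*h) (3*m) * omega h (3*m) / omega h m
      = - exp (- (complex_of_real pi * \<i>
          * complex_of_real (of_int (first_exponent (int (3*m)) h h') / (54 * real m))))"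
      (is ?first)
    and "omega h m * omega (2*h) (3*m) * omega h (3*m) / omega (2*h) m ^ 3
      = - exp (- (complex_of_real pi * \<i>
          * complex_of_real (of_int (second_exponent (int (3*m)) h h') / (27 * real m))))"
      (is ?second)
proof -
  show ?first
    using dedekind_sum_combinations(1)[OF assms] omega_quotient_odd_shift[where j=1, simplified] by blast
  show ?second
    using dedekind_sum_combinations(2)[OF assms] omega_quotient_odd_shift[where j=3, simplified] by blast
qed

theorem lemma3p5:
  fixes k :: nat and h h' :: int
  assumes "gcd k 6 = 3"
    and "coprime h (int k)"
    and "[h * h' = -1] (mod int k)"
    and "even h'"
  shows "(omega (2*h) (k div 3) * omega (2*h) k * omega h k / omega h (k div 3)
           = - exp (- (2 * pi * \<i> / (36 * of_nat k)) *
               of_int (-9 * int k + 9 * int k ^ 2 + h * (-9 + 5 * int k ^ 2) - 2 * int k ^ 2 * h')))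
       \<and> (omega h (k div 3) * omega (2*h) k * omega h k / omega (2*h) (k div 3) ^ 3
           = - exp (- (2 * pi * \<i> / (18 * of_nat k)) *
               of_int (3 * int k ^ 2 + h * (9 + int k ^ 2) - int k ^ 2 * h')))"
proof -
  obtain m where k: "k = 3 * m" using \<open>gcd k 6 = 3\<close> by (metis dvdE gcd_dvd1)
  have "odd k"
  proof
    assume "even k"
    then have "2 dvd gcd k 6" by simp
    then show False using \<open>gcd k 6 = 3\<close> by simp
  qed
  then have "odd m" "m > 0" using k by (simp_all add: odd_pos)
  have inv: "[h * h' = -1] (mod int (3 * m))" using assms(3) k by simp
  have "- (2 * pi * \<i> / (36 * of_nat k)) * of_int (first_exponent (int k) h h')
      = - (complex_of_real pi * \<i> * complex_of_real (of_int (first_exponent (int k) h h') / (54 * real m)))"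
    "- (2 * pi * \<i> / (18 * of_nat k)) * of_int (second_exponent (int k) h h')
      = - (complex_of_real pi * \<i> * complex_of_real (of_int (second_exponent (int k) h h') / (27 * real m)))"
    using \<open>m > 0\<close> unfolding k by (simp_all add: field_simps)
  then show ?thesis
    unfolding first_exponent_def[of "int k", symmetric] second_exponent_def[of "int k", symmetric]
    using omega_quotients[OF \<open>odd m\<close> \<open>even h'\<close> inv] unfolding k by (simp add: ac_simps)
qed

end
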